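(* Fix $t\in\{0,\dots,T\}$ and a $\mathcal F_t$-measurable random vector $\zeta_t:\Omega\to\mathbb R^d$. Then $$\zeta_t\in -K_t\quad \mathcal P\text{-q.s.}\qquad\Longleftrightarrow\qquad \langle \zeta_t, X_t\rangle\le 0\quad \overline{\mathcal P}\text{-q.s.}$$ Consequently, an $\mathbb F$-adapted process $\eta=(\eta_t)_{0\le t\le T}$ is an admissible trading strategy (i.e. $\eta\in\mathcal A$) if and only if $\langle\eta_t,X_t\rangle\le 0$ $\overline{\mathcal P}$-q.s. for all $t\le T$.
   Context: Abstract setting: $(\Omega,\mathcal F)$ is a measurable space with two filtrations $\mathbb F^0=(\mathcal F^0_t)_{t=0,\dots,T}\subset\mathbb F=(\mathcal F_t)_{t=0,\dots,T}$, $T\in\mathbb N$, and $\mathcal P$ is an arbitrary nonempty family of probability measures on $(\Omega,\mathcal F)$. A set is $\mathcal P$-polar if it is contained in a universally measurable set which is null under every $\mathbb P\in\mathcal P$; "$\mathcal P$-q.s." means outside a $\mathcal P$-polar set. Let $d\ge 2$ and $\langle x,y\rangle=\sum_i x^iy^i$. For each $t$, $K_t:\Omega\to 2^{\mathbb R^d}$ is an $\mathcal F^0_t$-measurable random set such that each $K_t(\omega)$ is a closed convex cone containing $\mathbb R^d_+$; $K_t^*(\omega):=\{y\in\mathbb R^d:\langle x,y\rangle\ge0\ \forall x\in K_t(\omega)\}$ and $K_t^{*,0}(\omega):=\{y\in K^*_t(\omega): y^d=1\}$. Standing assumptions: $K_t^*(\omega)\cap\partial\mathbb R^d_+=\{0\}$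 and $\mathrm{int}K^*_t(\omega)\neq\emptyset$ for all $\omega,t$; $S$ is an $\mathbb F^0$-adapted process with $S_t(\omega)\in K^{*,0}_t(\omega)\cap\mathrm{int}K^*_t(\omega)$ for all $\omega,t$; and there is a constant $c>1$ such that $c^{-1}S^i_t(\omega)\le y^i\le cS^i_t(\omega)$ for all $i\le d-1$, $y\in K^{*,0}_t(\omega)$, $\omega$, $t$. An $\mathbb F$-adapted process $\eta$ is an admissible trading strategy ($\eta\in\mathcal A$) if $\eta_t\in -K_t$ $\mathcal P$-q.s. for all $t\le T$. Enlargement: $\Lambda_1:=[c^{-1},c]^{d-1}$, $\Lambda:=(\Lambda_1)^{T+1}$ with elements $\theta=(\theta_0,\dots,\theta_T)$, $\mathcal F^\Lambda_T$ its Borel $\sigma$-field, $\overline\Omega:=\Omega\times\Lambda$, $\overline{\mathcal F}:=\mathcal F\otimes\mathcal F^\Lambda_T$. For $\bar\omega=(\omega,\theta)$, $X_t(\bar\omega):=\Pi_{K^{*,0}_t(\omega)}[S_t(\omega)\theta_t]$, where $S_t(\omega)\theta_t:=(S^1_t(\omega)\theta^1_t,\dots,S^{d-1}_t(\omega)\theta^{d-1}_t,S^d_t(\omega))$ and $\Pi_C$ is the Euclidean projection onto the closed convex set $C$. $\overline{\mathcal P}:=\{\overline{\mathbb P}$ probability on $(\overline\Omega,\overline{\mathcal F})$ with $\overline{\mathbb P}|_\Omega\in\mathcal P\}$. *)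

theory Defs
  imports "HOL-Probability.Probability"
begin

definition universally_measurable :: "'a measure \<Rightarrow> 'a set \<Rightarrow> bool" where
  "universally_measurable M A \<longleftrightarrow>
     (\<forall>\<mu>. prob_space \<mu> \<and> sets \<mu> = sets M \<longrightarrow> A \<in> sets (completion \<mu>))"

definition polar :: "'a measure set \<Rightarrow> 'a measure \<Rightarrow> 'a set \<Rightarrow> bool" where
  "polar Pfam M N \<longleftrightarrow>
     (\<exists>A. universally_measurable M A \<and> N \<subseteq> A \<and> (\<forall>P\<in>Pfam. emeasure (completion P) A = 0))"

definition qs :: "'a measure set \<Rightarrow> 'a measure \<Rightarrow> ('a \<Rightarrow> bool) \<Rightarrow> bool" where
  "qs Pfam M Q \<longleftrightarrow> (\<exists>N. polar Pfam M N \<and> (\<forall>\<omega>\<in>space M - N. Q \<omega>))"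

definition random_set_measurable :: "'a measure \<Rightarrow> ('a \<Rightarrow> (real^'d) set) \<Rightarrow> bool" where
  "random_set_measurable N K \<longleftrightarrow>
     (\<forall>U. open U \<longrightarrow> {\<omega>\<in>space N. K \<omega> \<inter> U \<noteq> {}} \<in> sets N)"

definition nonneg_orthant :: "(real^'d) set" where
  "nonneg_orthant = {x. \<forall>i. 0 \<le> x $ i}"

definition dual_cone :: "(real^'d) set \<Rightarrow> (real^'d) set" where
  "dual_cone K = {y. \<forall>x\<in>K. 0 \<le> inner x y}"

definition dual_cone0 :: "'d \<Rightarrow> (real^'d) set \<Rightarrow> (real^'d) set" where
  "dual_cone0 e K = {y \<in> dual_cone K. y $ e = 1}"

(* Lambda_1 = [1/c, c]^{d-1}, encoded as vectors whose numeraire coordinate e is 1 *)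
definition Lambda1 :: "'d \<Rightarrow> real \<Rightarrow> (real^'d) set" where
  "Lambda1 e c = {v. v $ e = 1 \<and> (\<forall>i. i \<noteq> e \<longrightarrow> 1 / c \<le> v $ i \<and> v $ i \<le> c)}"

definition LambdaM :: "nat \<Rightarrow> 'd \<Rightarrow> real \<Rightarrow> (nat \<Rightarrow> real^'d) measure" where
  "LambdaM T e c = PiM {0..T} (\<lambda>_. restrict_space borel (Lambda1 e c))"

(* S_t(omega) theta_t: coordinatewise product (theta has coordinate e equal to 1) *)
definition scale_price :: "real^'d \<Rightarrow> real^'d \<Rightarrow> real^'d" where
  "scale_price s \<theta> = (\<chi> i. s $ i * \<theta> $ i)"

definition Xproc :: "'d \<Rightarrow> (nat \<Rightarrow> 'a \<Rightarrow> (real^'d) set) \<Rightarrow> (nat \<Rightarrow> 'a \<Rightarrow> real^'d)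
                      \<Rightarrow> nat \<Rightarrow> 'a \<times> (nat \<Rightarrow> real^'d) \<Rightarrow> real^'d" where
  "Xproc e K S t \<omega>\<theta> =
     closest_point (dual_cone0 e (K t (fst \<omega>\<theta>))) (scale_price (S t (fst \<omega>\<theta>)) (snd \<omega>\<theta> t))"

definition enlarged_family :: "'a measure \<Rightarrow> 'b measure \<Rightarrow> 'a measure set \<Rightarrow> ('a \<times> 'b) measure set" where
  "enlarged_family M L Pfam =
     {Q. prob_space Q \<and> sets Q = sets (M \<Otimes>\<^sub>M L) \<and> distr Q M fst \<in> Pfam}"

definition admissible :: "'a measure set \<Rightarrow> 'a measure \<Rightarrow> (nat \<Rightarrow> 'a measure) \<Rightarrow> nat
      \<Rightarrow> (nat \<Rightarrow> 'a \<Rightarrow> (real^'d) set) \<Rightarrow> (nat \<Rightarrow> 'a \<Rightarrow> real^'d) \<Rightarrow> bool" where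
  "admissible Pfam M F T K \<eta> \<longleftrightarrow>
     (\<forall>t\<le>T. \<eta> t \<in> borel_measurable (F t)) \<and>
     (\<forall>t\<le>T. qs Pfam M (\<lambda>\<omega>. \<eta> t \<omega> \<in> uminus ` K t \<omega>))"

end

theory Submission
  imports Defs
begin

text \<open>If \<open>\<zeta> \<in> -K\<^sub>t\<close>, then \<open>\<zeta>\<close> is nonpositive against all of \<open>K\<^sub>t\<^sup>*\<^sup>,\<^sup>0\<close>, where \<open>X\<^sub>t\<close>
  takes its values, so the exceptional set lifts along the projection \<open>\<Omega>\<times>\<Lambda> \<rightarrow> \<Omega>\<close>.
  Conversely, if \<open>\<zeta>(\<omega>) \<notin> -K\<^sub>t(\<omega>)\<close>, separation gives \<open>y \<in> K\<^sub>t\<^sup>*\<^sup>,\<^sup>0(\<omega>)\<close> with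
  \<open>\<langle>\<zeta>(\<omega>), y\<rangle> > 0\<close>; the bound by \<open>c\<close> writes \<open>y = S\<^sub>t(\<omega>)\<theta>\<close> with \<open>\<theta> \<in> \<Lambda>\<^sub>1\<close>, and
  continuity of the projection keeps the strict inequality for a nearby rational \<open>\<theta>\<close>.
  Every \<open>P \<in> \<P>\<close> transported by \<open>\<omega> \<mapsto> (\<omega>, \<theta>)\<close> lies in the enlarged family, so the
  exceptional set in \<open>\<Omega>\<close> is a countable union of polar sets.\<close>

section \<open>Polar sets and the enlarged family\<close>

lemma vimage_sets_completion_distr:
  assumes f: "f \<in> measurable \<mu> N" and A: "A \<in> sets (completion (distr \<mu> N f))"
  shows "f -` A \<inter> space \<mu> \<in> sets (completion \<mu>)"
proof -
  obtain S N0 N' where A_eq: "A = S \<union> N0" and "N0 \<subseteq> N'" and N': "N' \<in> null_sets (distr \<mu> N f)"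
    and S: "S \<in> sets N"
    using sets_completionE[OF A] by auto
  have "f -` A \<inter> space \<mu> = (f -` S \<inter> space \<mu>) \<union> (f -` N0 \<inter> space \<mu>)"
    using A_eq by blast
  moreover have "f -` N0 \<inter> space \<mu> \<subseteq> f -` N' \<inter> space \<mu>"
    using \<open>N0 \<subseteq> N'\<close> by blast
  moreover have "f -` N' \<inter> space \<mu> \<in> null_sets \<mu>"
    using N' f by (simp add: null_sets_distr_iff)
  ultimately show ?thesis
    using f S by (intro sets_completionI) (auto intro: measurable_sets)
qed

lemma vimage_null_sets_completion_distr:
  assumes f: "f \<in> measurable \<mu> N" and A: "A \<in> null_sets (completion (distr \<mu> N f))"
  shows "f -` A \<inter> space \<mu> \<in> null_sets (completion \<mu>)"
proof -
  obtain N' where N': "N' \<in> null_sets (distr \<mu> N f)" and "A \<subseteq> N'"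
    using A unfolding null_sets_completion_iff2 by blast
  then have "f -` A \<inter> space \<mu> \<subseteq> f -` N' \<inter> space \<mu>" and "f -` N' \<inter> space \<mu> \<in> null_sets \<mu>"
    using f by (auto simp: null_sets_distr_iff)
  then show ?thesis
    unfolding null_sets_completion_iff2 by blast
qed

lemma universally_measurable_vimage:
  assumes f: "f \<in> measurable M N" and A: "universally_measurable N A"
  shows "universally_measurable M (f -` A \<inter> space M)"
  unfolding universally_measurable_def
proof (intro allI impI)
  fix \<mu> assume \<mu>: "prob_space \<mu> \<and> sets \<mu> = sets M"
  then have f\<mu>: "f \<in> measurable \<mu> N"
    using f measurable_cong_sets by blast
  moreover have "prob_space (distr \<mu> N f)"
    using \<mu> f\<mu> by (simp add: prob_space.prob_space_distr)
  ultimately have "A \<in> sets (completion (distr \<mu> N f))"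
    using A unfolding universally_measurable_def by simp
  then show "f -` A \<inter> space M \<in> sets (completion \<mu>)"
    using vimage_sets_completion_distr[OF f\<mu>] \<mu> sets_eq_imp_space_eq by metis
qed

lemma polar_vimage:
  assumes f: "f \<in> measurable M' M"
    and Pfam': "\<forall>Q\<in>Pfam'. prob_space Q \<and> sets Q = sets M' \<and> distr Q M f \<in> Pfam"
    and N: "polar Pfam M N"
  shows "polar Pfam' M' (f -` N \<inter> space M')"
proof -
  obtain A where A: "universally_measurable M A" "N \<subseteq> A"
    and A_null: "\<forall>P\<in>Pfam. emeasure (completion P) A = 0"
    using N unfolding polar_def by blast
  have "f -` A \<inter> space M' \<in> null_sets (completion Q)" if Q: "Q \<in> Pfam'" for Q
  proof -
    have fQ: "f \<in> measurable Q M"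
      using f Q Pfam' measurable_cong_sets by blast
    have "prob_space (distr Q M f)"
      using Q Pfam' fQ by (simp add: prob_space.prob_space_distr)
    then have "A \<in> sets (completion (distr Q M f))"
      using A(1) unfolding universally_measurable_def by simp
    moreover have "emeasure (completion (distr Q M f)) A = 0"
      using A_null Q Pfam' by blast
    ultimately have "A \<in> null_sets (completion (distr Q M f))"
      by (rule null_setsI[rotated])
    then show ?thesis
      using vimage_null_sets_completion_distr[OF fQ] Q Pfam' sets_eq_imp_space_eq by metis
  qed
  then show ?thesis
    unfolding polar_def using universally_measurable_vimage[OF f A(1)] A(2)
    by (intro exI[of _ "f -` A \<inter> space M'"]) auto
qed

lemma polar_countable_UN:
  assumes Pfam: "\<forall>P\<in>Pfam. prob_space P \<and> sets P = sets M"
    and I: "countable I" and N: "\<forall>i\<in>I. polar Pfam M (N i)"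
  shows "polar Pfam M (\<Union>i\<in>I. N i)"
proof -
  obtain A where A: "\<forall>i\<in>I. universally_measurable M (A i) \<and> N i \<subseteq> A i
      \<and> (\<forall>P\<in>Pfam. emeasure (completion P) (A i) = 0)"
    using N unfolding polar_def by metis
  have "universally_measurable M (\<Union>i\<in>I. A i)"
    using A I unfolding universally_measurable_def by (auto intro: sets.countable_UN')
  moreover have "(\<Union>i\<in>I. A i) \<in> null_sets (completion P)" if "P \<in> Pfam" for P
    using A I Pfam that unfolding universally_measurable_def
    by (intro null_sets_UN') (auto intro!: null_setsI)
  ultimately show ?thesis
    unfolding polar_def using A by (intro exI[of _ "\<Union>i\<in>I. A i"]) auto
qed

lemma distr_section_in_enlarged_family:
  assumes P: "P \<in> Pfam" "prob_space P" "sets P = sets M" and d: "d \<in> space L"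
  shows "distr P (M \<Otimes>\<^sub>M L) (\<lambda>\<omega>. (\<omega>, d)) \<in> enlarged_family M L Pfam"
proof -
  have f: "(\<lambda>\<omega>. (\<omega>, d)) \<in> measurable P (M \<Otimes>\<^sub>M L)"
    using P(3) d by (auto intro!: measurable_Pair simp: measurable_ident_sets)
  have "distr (distr P (M \<Otimes>\<^sub>M L) (\<lambda>\<omega>. (\<omega>, d))) M fst = distr P M (fst \<circ> (\<lambda>\<omega>. (\<omega>, d)))"
    using f by (intro distr_distr) auto
  also have "\<dots> = P"
    using P(3) by (simp add: comp_def distr_id2)
  finally show ?thesis
    unfolding enlarged_family_def using P f by (simp add: prob_space.prob_space_distr)
qed

lemma qs_enlarged_family_fst:
  assumes q: "qs Pfam M Q" and R: "\<forall>x\<in>space (M \<Otimes>\<^sub>M L). Q (fst x) \<longrightarrow> R x"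
  shows "qs (enlarged_family M L Pfam) (M \<Otimes>\<^sub>M L) R"
proof -
  obtain N where N: "polar Pfam M N" and Q: "\<forall>\<omega>\<in>space M - N. Q \<omega>"
    using q unfolding qs_def by blast
  have "polar (enlarged_family M L Pfam) (M \<Otimes>\<^sub>M L) (fst -` N \<inter> space (M \<Otimes>\<^sub>M L))"
    using N by (intro polar_vimage) (auto simp: enlarged_family_def)
  moreover have "R x" if "x \<in> space (M \<Otimes>\<^sub>M L) - fst -` N \<inter> space (M \<Otimes>\<^sub>M L)" for x
    using that Q R by (auto simp: space_pair_measure)
  ultimately show ?thesis
    unfolding qs_def by blast
qed

lemma qs_of_enlarged_family_countable:
  assumes Pfam: "\<forall>P\<in>Pfam. prob_space P \<and> sets P = sets M"
    and D: "countable D" "D \<subseteq> space L"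
    and q: "qs (enlarged_family M L Pfam) (M \<Otimes>\<^sub>M L) R"
    and Q: "\<forall>\<omega>\<in>space M. (\<forall>d\<in>D. R (\<omega>, d)) \<longrightarrow> Q \<omega>"
  shows "qs Pfam M Q"
proof -
  obtain N where N: "polar (enlarged_family M L Pfam) (M \<Otimes>\<^sub>M L) N"
    and R: "\<forall>x\<in>space (M \<Otimes>\<^sub>M L) - N. R x"
    using q unfolding qs_def by blast
  have "polar Pfam M ((\<lambda>\<omega>. (\<omega>, d)) -` N \<inter> space M)" if "d \<in> D" for d
    using that D(2) Pfam N
    by (intro polar_vimage) (auto intro!: measurable_Pair distr_section_in_enlarged_family)
  then have "polar Pfam M (\<Union>d\<in>D. (\<lambda>\<omega>. (\<omega>, d)) -` N \<inter> space M)"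
    using Pfam D(1) by (intro polar_countable_UN) auto
  moreover have "Q \<omega>" if "\<omega> \<in> space M - (\<Union>d\<in>D. (\<lambda>\<omega>. (\<omega>, d)) -` N \<inter> space M)" for \<omega>
    using that Q R D(2) by (auto simp: space_pair_measure)
  ultimately show ?thesis
    unfolding qs_def by blast
qed

section \<open>Dual cones\<close>

lemma dual_cone_coord_nonneg:
  assumes "nonneg_orthant \<subseteq> K" "y \<in> dual_cone K"
  shows "0 \<le> (y::real^'d) $ i"
proof -
  have "axis i 1 \<in> nonneg_orthant"
    by (auto simp: nonneg_orthant_def axis_def)
  then have "0 \<le> inner (axis i 1) y"
    using assms unfolding dual_cone_def by blast
  then show ?thesis
    by (simp add: inner_axis')
qed

lemma zero_coord_in_frontier_nonneg_orthant:
  assumes y: "y \<in> (nonneg_orthant :: (real^'d) set)" and yi: "y $ i = 0"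
  shows "y \<in> frontier nonneg_orthant"
proof -
  have "y \<notin> interior nonneg_orthant"
  proof
    assume "y \<in> interior nonneg_orthant"
    then obtain \<epsilon> where \<epsilon>: "\<epsilon> > 0" "ball y \<epsilon> \<subseteq> nonneg_orthant"
      using mem_interior by blast
    then have "y - (\<epsilon>/2) *\<^sub>R axis i 1 \<in> nonneg_orthant"
      by (auto simp: dist_norm)
    then show False
      using \<epsilon>(1) yi unfolding nonneg_orthant_def by (auto dest: spec[of _ i])
  qed
  then show ?thesis
    using y closure_subset unfolding frontier_def by blast
qed

lemma dual_cone_coord_pos:
  assumes "nonneg_orthant \<subseteq> K" "dual_cone K \<inter> frontier nonneg_orthant = {0}"
    and "y \<in> dual_cone K" "y \<noteq> 0"
  shows "0 < (y::real^'d) $ i"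
proof -
  have "y \<in> nonneg_orthant"
    using dual_cone_coord_nonneg[OF assms(1,3)] by (auto simp: nonneg_orthant_def)
  then have "y $ i \<noteq> 0"
    using assms(2-4) zero_coord_in_frontier_nonneg_orthant by blast
  then show ?thesis
    using dual_cone_coord_nonneg[OF assms(1,3)] by (simp add: order_le_neq_trans)
qed

lemma dual_cone0_eq_Inter:
  "dual_cone0 e K = (\<Inter>x\<in>K. {y. 0 \<le> inner x y}) \<inter> {y. inner (axis e 1) y = (1::real)}"
  unfolding dual_cone0_def dual_cone_def by (auto simp: inner_axis')

lemma closed_dual_cone0: "closed (dual_cone0 e (K::(real^'d) set))"
  unfolding dual_cone0_eq_Inter
  by (intro closed_Int closed_INT closed_halfspace_ge closed_hyperplane ballI)

lemma convex_dual_cone0: "convex (dual_cone0 e (K::(real^'d) set))"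
  unfolding dual_cone0_eq_Inter
  by (intro convex_Int convex_INT convex_halfspace_ge convex_hyperplane ballI)

lemma inner_closest_point_dual_cone0_nonpos:
  assumes z: "z \<in> uminus ` K" and ne: "dual_cone0 e K \<noteq> {}"
  shows "inner z (closest_point (dual_cone0 e K) x) \<le> 0"
proof -
  have "closest_point (dual_cone0 e K) x \<in> dual_cone K"
    using closest_point_in_set[OF closed_dual_cone0 ne] unfolding dual_cone0_def by blast
  then show ?thesis
    using z unfolding dual_cone_def by auto
qed

lemma exists_dual_cone_inner_pos:
  fixes K :: "(real^'d) set"
  assumes K: "closed K" "convex K" "cone K" "0 \<in> K" and z: "z \<notin> uminus ` K"
  shows "\<exists>a\<in>dual_cone K. 0 < inner z a"
proof -
  have "-z \<notin> K"
    using z by (metis add.inverse_inverse image_eqI)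
  then obtain a b where ab: "inner a (-z) < b" "\<forall>x\<in>K. b < inner a x"
    using separating_hyperplane_closed_point[OF K(2,1)] by blast
  have b: "b < 0"
    using ab(2) K(4) by force
  have "0 \<le> inner x a" if x: "x \<in> K" for x
  proof (rule ccontr)
    assume "\<not> 0 \<le> inner x a"
    then have neg: "inner a x < 0"
      by (simp add: inner_commute)
    have "(b / inner a x) *\<^sub>R x \<in> K"
      using K(3) x b neg unfolding cone_def by (simp add: divide_nonpos_neg)
    then have "b < inner a ((b / inner a x) *\<^sub>R x)"
      using ab(2) by blast
    then show False
      using neg by simp
  qed
  then have "a \<in> dual_cone K"
    unfolding dual_cone_def by blast
  moreover have "0 < inner z a"
    using ab(1) b by (simp add: inner_commute)
  ultimately show ?thesis by blast
qed

lemma exists_dual_cone0_inner_pos: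
  fixes K :: "(real^'d) set"
  assumes K: "closed K" "convex K" "cone K" "nonneg_orthant \<subseteq> K"
    and K_dual: "dual_cone K \<inter> frontier nonneg_orthant = {0}"
    and z: "z \<notin> uminus ` K"
  shows "\<exists>y\<in>dual_cone0 e K. 0 < inner z y"
proof -
  have "0 \<in> K"
    using K(4) by (auto simp: nonneg_orthant_def)
  then obtain a where a: "a \<in> dual_cone K" "0 < inner z a"
    using exists_dual_cone_inner_pos[OF K(1-3) _ z] by blast
  then have ae: "0 < a $ e"
    using dual_cone_coord_pos[OF K(4) K_dual] by fastforce
  have "(1 / a $ e) *\<^sub>R a \<in> dual_cone0 e K"
    using a(1) ae unfolding dual_cone0_def dual_cone_def by auto
  moreover have "0 < inner z ((1 / a $ e) *\<^sub>R a)"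
    using a(2) ae by simp
  ultimately show ?thesis by blast
qed

lemma scale_price_onto_Lambda1:
  assumes s: "\<forall>i. 0 < s $ i" "s $ e = 1" and y: "y $ e = 1"
    and bnd: "\<forall>i. i \<noteq> e \<longrightarrow> s $ i / c \<le> y $ i \<and> y $ i \<le> c * s $ i" and c: "0 < c"
  shows "\<exists>\<theta>\<in>Lambda1 e c. scale_price s \<theta> = y"
proof
  let ?\<theta> = "\<chi> i. y $ i / s $ i"
  show "scale_price s ?\<theta> = y"
    using s(1) unfolding scale_price_def by (simp add: vec_eq_iff less_imp_neq[symmetric])
  have "1 / c \<le> y $ i / s $ i \<and> y $ i / s $ i \<le> c" if "i \<noteq> e" for i
    using bnd that s(1)[rule_format, of i] c by (auto simp: field_simps)
  then show "?\<theta> \<in> Lambda1 e c"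
    unfolding Lambda1_def using s(2) y by simp
qed

section \<open>Rational weights\<close>

definition Lambda1_rat :: "'d \<Rightarrow> real \<Rightarrow> (real^'d) set" where
  "Lambda1_rat e c = Lambda1 e c \<inter> {v. \<forall>i. v $ i \<in> \<rat>}"

lemma countable_Lambda1_rat: "countable (Lambda1_rat (e::'d::finite) c)"
proof -
  have "Lambda1_rat e c \<subseteq> range (\<lambda>f. \<chi> i. of_rat (f i))"
  proof
    fix v assume "v \<in> Lambda1_rat e c"
    then have "\<forall>i. \<exists>q. v $ i = of_rat q"
      unfolding Lambda1_rat_def by (auto elim: Rats_cases)
    then obtain f where "\<forall>i. v $ i = of_rat (f i)"
      by (rule choice[THEN exE])
    then have "v = (\<chi> i. of_rat (f i))"
      by (simp add: vec_eq_iff)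
    then show "v \<in> range (\<lambda>f. \<chi> i. of_rat (f i))" by blast
  qed
  moreover have "countable (range (\<lambda>f::'d \<Rightarrow> rat. (\<chi> i. of_rat (f i)) :: real^'d))"
    by simp
  ultimately show ?thesis
    by (rule countable_subset)
qed

lemma Lambda1_subset_closure_Lambda1_rat:
  fixes e :: "'d::finite"
  assumes c: "1 < c"
  shows "Lambda1 e c \<subseteq> closure (Lambda1_rat e c)"
proof
  fix \<theta> assume \<theta>: "\<theta> \<in> Lambda1 e c"
  show "\<theta> \<in> closure (Lambda1_rat e c)"
    unfolding closure_approachable
  proof (intro allI impI)
    fix \<epsilon> :: real assume \<epsilon>: "0 < \<epsilon>"
    define \<eta> where "\<eta> = \<epsilon> / (2 * real CARD('d))"
    have \<eta>: "0 < \<eta>"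
      using \<epsilon> by (simp add: \<eta>_def)
    have "\<exists>r. r \<in> \<rat> \<and> (i = e \<longrightarrow> r = 1) \<and> (i \<noteq> e \<longrightarrow> 1/c \<le> r \<and> r \<le> c) \<and> \<bar>r - \<theta> $ i\<bar> \<le> \<eta>"
      for i
    proof (cases "i = e")
      case True
      then show ?thesis
        using \<theta> \<eta> unfolding Lambda1_def by auto
    next
      case False
      have "1/c < 1"
        using c by simp
      then have "1/c < c"
        using c by linarith
      then have "max (1/c) (\<theta> $ i - \<eta>) < min c (\<theta> $ i + \<eta>)"
        using \<theta> False \<eta> unfolding Lambda1_def by auto
      then obtain r where "r \<in> \<rat>" "max (1/c) (\<theta> $ i - \<eta>) < r" "r < min c (\<theta> $ i + \<eta>)"
        using Rats_dense_in_real by blast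
      then show ?thesis
        using False by (intro exI[of _ r]) auto
    qed
    then obtain r where r: "\<forall>i. r i \<in> \<rat> \<and> (i = e \<longrightarrow> r i = 1)
        \<and> (i \<noteq> e \<longrightarrow> 1/c \<le> r i \<and> r i \<le> c) \<and> \<bar>r i - \<theta> $ i\<bar> \<le> \<eta>"
      using choice[of "\<lambda>i r. r \<in> \<rat> \<and> (i = e \<longrightarrow> r = 1) \<and> (i \<noteq> e \<longrightarrow> 1/c \<le> r \<and> r \<le> c)
        \<and> \<bar>r - \<theta> $ i\<bar> \<le> \<eta>"] by blast
    define v where "v = (\<chi> i. r i)"
    have "v \<in> Lambda1_rat e c"
      using r unfolding v_def Lambda1_rat_def Lambda1_def by auto
    moreover have "dist v \<theta> < \<epsilon>"
    proof -
      have "dist v \<theta> \<le> (\<Sum>i\<in>UNIV. \<bar>(v - \<theta>) $ i\<bar>)"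
        unfolding dist_norm by (rule norm_le_l1_cart)
      also have "\<dots> \<le> (\<Sum>i\<in>(UNIV::'d set). \<eta>)"
        using r by (intro sum_mono) (simp add: v_def)
      also have "\<dots> = \<epsilon> / 2"
        by (simp add: \<eta>_def)
      finally show ?thesis
        using \<epsilon> by simp
    qed
    ultimately show "\<exists>v\<in>Lambda1_rat e c. dist v \<theta> < \<epsilon>" by blast
  qed
qed

lemma exists_Lambda1_rat_inner_closest_point_pos:
  fixes K :: "(real^'d) set"
  assumes K: "closed K" "convex K" "cone K" "nonneg_orthant \<subseteq> K"
    and K_dual: "dual_cone K \<inter> frontier nonneg_orthant = {0}"
    and s: "s \<in> dual_cone0 e K" and c: "1 < c"
    and bnd: "\<forall>y\<in>dual_cone0 e K. \<forall>i. i \<noteq> e \<longrightarrow> s $ i / c \<le> y $ i \<and> y $ i \<le> c * s $ i"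
    and z: "z \<notin> uminus ` K"
  shows "\<exists>\<theta>\<in>Lambda1_rat e c. 0 < inner z (closest_point (dual_cone0 e K) (scale_price s \<theta>))"
proof -
  let ?C = "dual_cone0 e K"
  let ?U = "{\<theta>. 0 < inner z (closest_point ?C (scale_price s \<theta>))}"
  obtain y where y: "y \<in> ?C" "0 < inner z y"
    using exists_dual_cone0_inner_pos[OF K K_dual z] by blast
  have s_dual: "s \<in> dual_cone K" "s $ e = 1" and y_e: "y $ e = 1"
    using s y(1) unfolding dual_cone0_def by auto
  then have "s \<noteq> 0"
    by auto
  then have s_pos: "\<forall>i. 0 < s $ i"
    using dual_cone_coord_pos[OF K(4) K_dual s_dual(1)] by blast
  have y_bnd: "\<forall>i. i \<noteq> e \<longrightarrow> s $ i / c \<le> y $ i \<and> y $ i \<le> c * s $ i"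
    using bnd y(1) by blast
  moreover have "0 < c"
    using c by simp
  ultimately obtain \<theta> where \<theta>: "\<theta> \<in> Lambda1 e c" "scale_price s \<theta> = y"
    using scale_price_onto_Lambda1[OF s_pos s_dual(2) y_e] by blast
  have "\<theta> \<in> ?U"
    using \<theta>(2) y by (simp add: closest_point_self)
  moreover have "open ?U"
  proof -
    have cs: "continuous_on UNIV (scale_price s)"
      unfolding scale_price_def[abs_def] by (intro continuous_intros)
    have ccp: "continuous_on UNIV (closest_point ?C)"
      using convex_dual_cone0 closed_dual_cone0 s by (intro continuous_on_closest_point) auto
    have "continuous_on UNIV (\<lambda>\<theta>. inner z (closest_point ?C (scale_price s \<theta>)))"
      by (intro continuous_on_inner continuous_on_const continuous_on_compose2[OF ccp cs]) auto
    then show ?thesis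
      by (intro open_Collect_less continuous_on_const)
  qed
  moreover have "\<theta> \<in> closure (Lambda1_rat e c)"
    using Lambda1_subset_closure_Lambda1_rat[OF c] \<theta>(1) by blast
  ultimately have "?U \<inter> Lambda1_rat e c \<noteq> {}"
    using open_Int_closure_eq_empty by blast
  then show ?thesis by blast
qed

section \<open>Quasi-sure characterisation of \<open>-K\<close>\<close>

lemma qs_neg_cone_iff_enlarged_family:
  fixes K :: "'a \<Rightarrow> (real^'d) set" and s \<zeta> :: "'a \<Rightarrow> real^'d"
  assumes Pfam: "\<forall>P\<in>Pfam. prob_space P \<and> sets P = sets M" and t: "t \<le> T"
    and K: "\<forall>\<omega>\<in>space M. closed (K \<omega>) \<and> convex (K \<omega>) \<and> cone (K \<omega>) \<and> nonneg_orthant \<subseteq> K \<omega>"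
    and K_dual: "\<forall>\<omega>\<in>space M. dual_cone (K \<omega>) \<inter> frontier nonneg_orthant = {0}"
    and s: "\<forall>\<omega>\<in>space M. s \<omega> \<in> dual_cone0 e (K \<omega>)" and c: "1 < c"
    and bnd: "\<forall>\<omega>\<in>space M. \<forall>y\<in>dual_cone0 e (K \<omega>). \<forall>i. i \<noteq> e \<longrightarrow>
                s \<omega> $ i / c \<le> y $ i \<and> y $ i \<le> c * s \<omega> $ i"
  shows "qs Pfam M (\<lambda>\<omega>. \<zeta> \<omega> \<in> uminus ` K \<omega>) \<longleftrightarrow>
    qs (enlarged_family M (LambdaM T e c) Pfam) (M \<Otimes>\<^sub>M LambdaM T e c)
      (\<lambda>\<omega>\<theta>. inner (\<zeta> (fst \<omega>\<theta>))
         (closest_point (dual_cone0 e (K (fst \<omega>\<theta>))) (scale_price (s (fst \<omega>\<theta>)) (snd \<omega>\<theta> t))) \<le> 0)"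
    (is "_ \<longleftrightarrow> qs ?Fam ?M ?R")
proof
  assume "qs Pfam M (\<lambda>\<omega>. \<zeta> \<omega> \<in> uminus ` K \<omega>)"
  moreover have "?R x" if x: "x \<in> space ?M" and z: "\<zeta> (fst x) \<in> uminus ` K (fst x)" for x
  proof -
    have "fst x \<in> space M"
      using x by (auto simp: space_pair_measure)
    then have "dual_cone0 e (K (fst x)) \<noteq> {}"
      using s by blast
    then show ?thesis
      using inner_closest_point_dual_cone0_nonpos[OF z] by blast
  qed
  ultimately show "qs ?Fam ?M ?R"
    by (intro qs_enlarged_family_fst) auto
next
  assume q: "qs ?Fam ?M ?R"
  \<comment> \<open>Polar sets are only stable under countable unions, so we test against the
     countably many constant weight paths with rational entries.\<close>
  define D where "D = (\<lambda>\<theta>. restrict (\<lambda>_. \<theta>) {0..T}) ` Lambda1_rat e c"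
  have D_countable: "countable D"
    unfolding D_def using countable_Lambda1_rat by blast
  have D_space: "D \<subseteq> space (LambdaM T e c)"
    unfolding D_def LambdaM_def Lambda1_rat_def by (auto simp: space_PiM space_restrict_space)
  have "\<zeta> \<omega> \<in> uminus ` K \<omega>" if \<omega>: "\<omega> \<in> space M" and R: "\<forall>d\<in>D. ?R (\<omega>, d)" for \<omega>
  proof (rule ccontr)
    assume z: "\<zeta> \<omega> \<notin> uminus ` K \<omega>"
    have "closed (K \<omega>)" "convex (K \<omega>)" "cone (K \<omega>)" "nonneg_orthant \<subseteq> K \<omega>"
      using K \<omega> by auto
    then obtain \<theta> where \<theta>: "\<theta> \<in> Lambda1_rat e c"
      and pos: "0 < inner (\<zeta> \<omega>) (closest_point (dual_cone0 e (K \<omega>)) (scale_price (s \<omega>) \<theta>))"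
      using exists_Lambda1_rat_inner_closest_point_pos[OF _ _ _ _ _ _ c _ z] K_dual s bnd \<omega>
      by blast
    have "restrict (\<lambda>_. \<theta>) {0..T} \<in> D"
      unfolding D_def using \<theta> by blast
    then have "?R (\<omega>, restrict (\<lambda>_. \<theta>) {0..T})"
      using R by blast
    then show False
      using pos t by simp
  qed
  then show "qs Pfam M (\<lambda>\<omega>. \<zeta> \<omega> \<in> uminus ` K \<omega>)"
    by (intro qs_of_enlarged_family_countable[OF Pfam D_countable D_space q]) blast
qed

theorem mainTheorem1:
  fixes M :: "'a measure" and F0 F :: "nat \<Rightarrow> 'a measure" and T :: nat
    and Pfam :: "'a measure set"
    and K :: "nat \<Rightarrow> 'a \<Rightarrow> (real^'d) set" and S :: "nat \<Rightarrow> 'a \<Rightarrow> real^'d"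
    and e :: 'd and c :: real
  assumes dim: "CARD('d) \<ge> 2"
    and Pfam_ne: "Pfam \<noteq> {}"
    and Pfam_prob: "\<forall>P\<in>Pfam. prob_space P \<and> sets P = sets M"
    and filt_sub: "\<forall>t\<le>T. subalgebra M (F t) \<and> subalgebra (F t) (F0 t)"
    and filt_mono: "\<forall>s t. s \<le> t \<and> t \<le> T \<longrightarrow> sets (F0 s) \<subseteq> sets (F0 t) \<and> sets (F s) \<subseteq> sets (F t)"
    and K_meas: "\<forall>t\<le>T. random_set_measurable (F0 t) (K t)"
    and K_cone: "\<forall>t\<le>T. \<forall>\<omega>\<in>space M. closed (K t \<omega>) \<and> convex (K t \<omega>) \<and> cone (K t \<omega>)
                     \<and> nonneg_orthant \<subseteq> K t \<omega>"
    and K_dual: "\<forall>t\<le>T. \<forall>\<omega>\<in>space M. dual_cone (K t \<omega>) \<inter> frontier nonneg_orthant = {0}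
                     \<and> interior (dual_cone (K t \<omega>)) \<noteq> {}"
    and S_adapted: "\<forall>t\<le>T. S t \<in> borel_measurable (F0 t)"
    and S_in: "\<forall>t\<le>T. \<forall>\<omega>\<in>space M. S t \<omega> \<in> dual_cone0 e (K t \<omega>) \<inter> interior (dual_cone (K t \<omega>))"
    and c_gt: "c > 1"
    and c_bound: "\<forall>t\<le>T. \<forall>\<omega>\<in>space M. \<forall>y\<in>dual_cone0 e (K t \<omega>). \<forall>i. i \<noteq> e \<longrightarrow>
                     S t \<omega> $ i / c \<le> y $ i \<and> y $ i \<le> c * S t \<omega> $ i"
  shows "(\<forall>t\<le>T. \<forall>\<zeta>\<in>borel_measurable (F t).
            qs Pfam M (\<lambda>\<omega>. \<zeta> \<omega> \<in> uminus ` K t \<omega>) \<longleftrightarrow>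
            qs (enlarged_family M (LambdaM T e c) Pfam) (M \<Otimes>\<^sub>M LambdaM T e c)
               (\<lambda>\<omega>\<theta>. inner (\<zeta> (fst \<omega>\<theta>)) (Xproc e K S t \<omega>\<theta>) \<le> 0))
       \<and> (\<forall>\<eta>. (\<forall>t\<le>T. \<eta> t \<in> borel_measurable (F t)) \<longrightarrow>
            (admissible Pfam M F T K \<eta> \<longleftrightarrow>
             (\<forall>t\<le>T. qs (enlarged_family M (LambdaM T e c) Pfam) (M \<Otimes>\<^sub>M LambdaM T e c)
                       (\<lambda>\<omega>\<theta>. inner (\<eta> t (fst \<omega>\<theta>)) (Xproc e K S t \<omega>\<theta>) \<le> 0))))"
proof -
  have "qs Pfam M (\<lambda>\<omega>. \<zeta> \<omega> \<in> uminus ` K t \<omega>) \<longleftrightarrow>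
          qs (enlarged_family M (LambdaM T e c) Pfam) (M \<Otimes>\<^sub>M LambdaM T e c)
             (\<lambda>\<omega>\<theta>. inner (\<zeta> (fst \<omega>\<theta>)) (Xproc e K S t \<omega>\<theta>) \<le> 0)"
    if t: "t \<le> T" for t \<zeta>
    unfolding Xproc_def
  proof (rule qs_neg_cone_iff_enlarged_family[OF Pfam_prob t _ _ _ c_gt])
    show "\<forall>\<omega>\<in>space M. closed (K t \<omega>) \<and> convex (K t \<omega>) \<and> cone (K t \<omega>) \<and> nonneg_orthant \<subseteq> K t \<omega>"
      using K_cone t by blast
    show "\<forall>\<omega>\<in>space M. dual_cone (K t \<omega>) \<inter> frontier nonneg_orthant = {0}"
      using K_dual t by blast
    show "\<forall>\<omega>\<in>space M. S t \<omega> \<in> dual_cone0 e (K t \<omega>)"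
      using S_in t by blast
    show "\<forall>\<omega>\<in>space M. \<forall>y\<in>dual_cone0 e (K t \<omega>). \<forall>i. i \<noteq> e \<longrightarrow>
            S t \<omega> $ i / c \<le> y $ i \<and> y $ i \<le> c * S t \<omega> $ i"
      using c_bound t by blast
  qed
  then show ?thesis
    unfolding admissible_def by blast
qed

end
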